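(* Let $w_0\ge w_1\ge\cdots\ge w_{n-1}$ be positive real numbers with sum $W$. Then $$\sum_{i=0}^{n-1} w_i\Bigl(\tfrac12+\lfloor \log_2(i+1)\rfloor\Bigr)\ \ge\ \sum_{i=0}^{n-1}\tfrac12\, w_i\log_2(W/w_i).$$ *)

theory Defs
  imports Complex_Main
begin

end

(* The numbers l j = 1 + 2 floor(log2 j) are the codeword lengths of the Elias gamma code of the
   positive integers; there are 2^m integers j with floor(log2 j) = m, so the lengths satisfy
   Kraft's inequality sum_j 2^(-l j) <= 1. Gibbs' inequality then bounds the entropy term
   sum_i w_i log2(W/w_i) by the mean code length sum_i w_i l(i+1); halving gives the claim. *)
theory Submission
  imports Defs
begin

lemma gibbs_inequality:
  fixes w q :: "'a \<Rightarrow> real"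
  assumes "finite A" and "b > 1"
    and w_pos: "\<And>i. i \<in> A \<Longrightarrow> w i > 0"
    and q_pos: "\<And>i. i \<in> A \<Longrightarrow> q i > 0"
    and q_sum: "(\<Sum>i\<in>A. q i) \<le> 1"
  shows "(\<Sum>i\<in>A. w i * log b ((\<Sum>j\<in>A. w j) / w i)) \<le> (\<Sum>i\<in>A. w i * - log b (q i))"
proof -
  define W where "W = (\<Sum>j\<in>A. w j)"
  have "ln b > 0" using \<open>b > 1\<close> by simp
  have termwise: "w i * log b (W / w i) \<le> (W * q i - w i) / ln b + w i * - log b (q i)"
    if "i \<in> A" for i
  proof -
    have "w i > 0" "q i > 0" using that w_pos q_pos by auto
    moreover have "W \<ge> w i"
      unfolding W_def using \<open>finite A\<close> that w_pos by (intro member_le_sum) (auto intro: less_imp_le)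
    ultimately have "W > 0" by linarith
    then have x_pos: "W * q i / w i > 0" using \<open>w i > 0\<close> \<open>q i > 0\<close> by simp
    have "log b (W / w i) = log b (W * q i / w i) - log b (q i)"
      using \<open>w i > 0\<close> \<open>q i > 0\<close> \<open>W > 0\<close> by (simp add: log_divide log_mult)
    moreover have "log b (W * q i / w i) \<le> (W * q i / w i - 1) / ln b"
      using ln_le_minus_one[OF x_pos] \<open>ln b > 0\<close> by (simp add: log_def divide_right_mono)
    ultimately have "w i * log b (W / w i) \<le> w i * ((W * q i / w i - 1) / ln b - log b (q i))"
      using \<open>w i > 0\<close> by (intro mult_left_mono) auto
    also have "\<dots> = (W * q i - w i) / ln b + w i * - log b (q i)"
      using \<open>w i > 0\<close> \<open>ln b > 0\<close> by (simp add: field_simps)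
    finally show ?thesis .
  qed
  have "(\<Sum>i\<in>A. w i * log b (W / w i))
          \<le> (\<Sum>i\<in>A. (W * q i - w i) / ln b + w i * - log b (q i))"
    using termwise by (rule sum_mono)
  also have "\<dots> = W * ((\<Sum>i\<in>A. q i) - 1) / ln b + (\<Sum>i\<in>A. w i * - log b (q i))"
    by (simp add: W_def sum.distrib sum_subtractf sum_negf sum_distrib_left right_diff_distrib
        flip: sum_divide_distrib)
  also have "\<dots> \<le> (\<Sum>i\<in>A. w i * - log b (q i))"
  proof -
    have "W \<ge> 0" unfolding W_def using w_pos by (intro sum_nonneg) (auto intro: less_imp_le)
    then have "W * ((\<Sum>i\<in>A. q i) - 1) \<le> 0" using q_sum by (simp add: mult_nonneg_nonpos)
    then show ?thesis using \<open>ln b > 0\<close> by (simp add: divide_nonpos_pos)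
  qed
  finally show ?thesis unfolding W_def .
qed

definition elias_gamma_length :: "nat \<Rightarrow> real" where
  "elias_gamma_length j = 1 + 2 * real_of_int \<lfloor>log 2 (real j)\<rfloor>"

lemma elias_gamma_length_eq:
  assumes "2 ^ m \<le> j" and "j < 2 ^ Suc m"
  shows "elias_gamma_length j = 1 + 2 * real m"
proof -
  have "\<lfloor>log (real (2::nat)) (real j)\<rfloor> = int m"
    using assms by (intro floor_log_nat_eq_if) auto
  then show ?thesis by (simp add: elias_gamma_length_def)
qed

lemma elias_gamma_kraft_sum_pow2:
  "(\<Sum>j\<in>{1..<2 ^ m}. 2 powr - elias_gamma_length j) = 1 - 2 powr - real m"
proof (induction m)
  case 0
  then show ?case by simp
next
  case (Suc m)
  have block: "(\<Sum>j\<in>{2 ^ m..<2 ^ Suc m}. 2 powr - elias_gamma_length j) = 2 powr - real (Suc m)"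
  proof -
    have "(\<Sum>j\<in>{2 ^ m..<2 ^ Suc m}. 2 powr - elias_gamma_length j)
            = (\<Sum>j\<in>{2 ^ m..<2 ^ Suc m::nat}. 2 powr - (1 + 2 * real m))"
      by (intro sum.cong refl) (auto simp: elias_gamma_length_eq)
    also have "\<dots> = 2 ^ m * 2 powr - (1 + 2 * real m)"
      by simp
    also have "\<dots> = 2 powr real m * 2 powr - (1 + 2 * real m)"
      by (simp add: powr_realpow)
    also have "\<dots> = 2 powr (real m - (1 + 2 * real m))"
      by (simp only: diff_conv_add_uminus powr_add)
    also have "real m - (1 + 2 * real m) = - real (Suc m)"
      by simp
    finally show ?thesis .
  qed
  have "(\<Sum>j\<in>{1..<2 ^ Suc m}. 2 powr - elias_gamma_length j)
          = (\<Sum>j\<in>{1..<2 ^ m}. 2 powr - elias_gamma_length j)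
            + (\<Sum>j\<in>{2 ^ m..<2 ^ Suc m}. 2 powr - elias_gamma_length j)"
    by (intro sum.atLeastLessThan_concat[symmetric]) auto
  also have "\<dots> = 1 - 2 powr - real m + 2 powr - real (Suc m)"
    by (simp only: Suc.IH block)
  also have "\<dots> = 1 - 2 powr - real (Suc m)"
    by (simp add: powr_diff powr_minus_divide)
  finally show ?case .
qed

lemma elias_gamma_kraft: "(\<Sum>i<n. 2 powr - elias_gamma_length (Suc i)) \<le> 1"
proof -
  have "(\<Sum>i<n. 2 powr - elias_gamma_length (Suc i))
          = (\<Sum>j\<in>{Suc 0..<Suc n}. 2 powr - elias_gamma_length j)"
    by (simp only: sum.shift_bounds_Suc_ivl atLeast0LessThan)
  also have "\<dots> \<le> (\<Sum>j\<in>{1..<2 ^ Suc n}. 2 powr - elias_gamma_length j)"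
    using less_exp[of "Suc n"] by (intro sum_mono2) auto
  also have "\<dots> = 1 - 2 powr - real (Suc n)"
    by (rule elias_gamma_kraft_sum_pow2)
  finally show ?thesis using powr_ge_zero[of 2 "- real (Suc n)"] by linarith
qed

theorem lemma6:
  fixes w :: "nat \<Rightarrow> real" and n :: nat and W :: real
  assumes pos: "\<And>i. i < n \<Longrightarrow> w i > 0"
    and mono: "\<And>i j. i \<le> j \<Longrightarrow> j < n \<Longrightarrow> w j \<le> w i"
    and W_def: "W = (\<Sum>i<n. w i)"
  shows "(\<Sum>i<n. w i * (1/2 + real_of_int \<lfloor>log 2 (real (i + 1))\<rfloor>))
           \<ge> (\<Sum>i<n. 1/2 * w i * log 2 (W / w i))"
proof -
  have "(\<Sum>i<n. w i * log 2 (W / w i))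
          \<le> (\<Sum>i<n. w i * - log 2 (2 powr - elias_gamma_length (Suc i)))"
    unfolding W_def using pos elias_gamma_kraft by (intro gibbs_inequality) auto
  also have "\<dots> = (\<Sum>i<n. w i * elias_gamma_length (Suc i))"
    by simp
  finally have "1/2 * (\<Sum>i<n. w i * log 2 (W / w i))
                  \<le> 1/2 * (\<Sum>i<n. w i * elias_gamma_length (Suc i))"
    by simp
  then show ?thesis
    by (simp add: sum_distrib_left elias_gamma_length_def algebra_simps)
qed

end
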